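(* Let $S$ be a compact metric space and $h:\mathbb{R}^d\times S\to\mathbb{R}^d$ a jointly continuous map for which there is $L>0$ with $\lVert h(x_1,y)-h(x_2,y)\rVert\le L\lVert x_1-x_2\rVert$ for all $x_1,x_2\in\mathbb{R}^d$, $y\in S$. For $c\ge 1$ put $h_c(x,y):=h(cx,y)/c$, and let $h_\infty(x,y)$ be the set of all $u\in\mathbb{R}^d$ with $\liminf_{c\to\infty}\lVert h_c(x,y)-u\rVert=0$. Assume (S1): whenever $c_n\uparrow\infty$, $y_n\to y$ in $S$, $x\in\mathbb{R}^d$ and $\lim_{n\to\infty}h_{c_n}(x,y_n)=u$ for some $u\in\mathbb{R}^d$, then $u\in h_\infty(x,y)$. Suppose $x_n\to x$ in $\mathbb{R}^d$, $y_n\to y$ in $S$, $c_n\uparrow\infty$ and $\lim_{n\to\infty}h_{c_n}(x_n,y_n)=u$. Then $u\in h_\infty(x,y)$. *)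

theory Defs
  imports "HOL-Analysis.Analysis"
begin

definition hscale :: "('a::real_normed_vector \<Rightarrow> 'b \<Rightarrow> 'a) \<Rightarrow> real \<Rightarrow> 'a \<Rightarrow> 'b \<Rightarrow> 'a" where
  "hscale h c x y = (1 / c) *\<^sub>R h (c *\<^sub>R x) y"

definition hinf :: "('a::real_normed_vector \<Rightarrow> 'b \<Rightarrow> 'a) \<Rightarrow> 'a \<Rightarrow> 'b \<Rightarrow> 'a set" where
  "hinf h x y = {u. Liminf at_top (\<lambda>c::real. ereal (norm (hscale h c x y - u))) = 0}"

end

theory Submission
  imports Defs
begin

text \<open>Rescaling preserves the Lipschitz constant, so the scaled maps are equi-Lipschitz in \<open>x\<close>;
  hence \<open>h\<^sub>c\<^sub>n(x\<^sub>n,y\<^sub>n)\<close> and \<open>h\<^sub>c\<^sub>n(x,y\<^sub>n)\<close> have the same limit, and (S1) applies to the latter.\<close>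

lemma hscale_lipschitz:
  fixes h :: "'a::real_normed_vector \<Rightarrow> 'b \<Rightarrow> 'a"
  assumes "c > 0" and lip: "\<And>x1 x2. norm (h x1 y - h x2 y) \<le> L * norm (x1 - x2)"
  shows "norm (hscale h c x1 y - hscale h c x2 y) \<le> L * norm (x1 - x2)"
proof -
  have "norm (hscale h c x1 y - hscale h c x2 y) = norm (h (c *\<^sub>R x1) y - h (c *\<^sub>R x2) y) / c"
    using \<open>c > 0\<close> by (simp add: hscale_def flip: scaleR_diff_right)
  also have "\<dots> \<le> L * norm (c *\<^sub>R x1 - c *\<^sub>R x2) / c"
    using \<open>c > 0\<close> lip by (intro divide_right_mono) auto
  also have "\<dots> = L * norm (x1 - x2)"
    using \<open>c > 0\<close> by (simp flip: scaleR_diff_right)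
  finally show ?thesis .
qed

lemma tendsto_at_limit_point_if_equi_lipschitz:
  fixes f :: "nat \<Rightarrow> 'a::real_normed_vector \<Rightarrow> 'c::real_normed_vector"
  assumes lip: "\<And>n. norm (f n (xs n) - f n x) \<le> L * norm (xs n - x)"
    and "xs \<longlonglongrightarrow> x" and lim: "(\<lambda>n. f n (xs n)) \<longlonglongrightarrow> u"
  shows "(\<lambda>n. f n x) \<longlonglongrightarrow> u"
proof -
  have "(\<lambda>n. L * norm (xs n - x)) \<longlonglongrightarrow> 0"
    using \<open>xs \<longlonglongrightarrow> x\<close> by (intro tendsto_mult_right_zero) (simp add: tendsto_norm_zero_iff LIM_zero)
  then have "(\<lambda>n. f n (xs n) - f n x) \<longlonglongrightarrow> 0"
    by (rule Lim_null_comparison[OF always_eventually, OF allI, OF lip])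
  from tendsto_diff[OF lim this] show ?thesis
    by simp
qed

theorem lemma1:
  fixes h :: "real ^ 'd \<Rightarrow> 'b::metric_space \<Rightarrow> real ^ 'd"
    and S :: "'b set" and L :: real
    and xs :: "nat \<Rightarrow> real ^ 'd" and ys :: "nat \<Rightarrow> 'b" and cs :: "nat \<Rightarrow> real"
    and x :: "real ^ 'd" and y :: 'b and u :: "real ^ 'd"
  assumes "compact S"
    and "continuous_on (UNIV \<times> S) (\<lambda>(x, y). h x y)"
    and "L > 0"
    and "\<forall>x1 x2. \<forall>y\<in>S. norm (h x1 y - h x2 y) \<le> L * norm (x1 - x2)"
    and S1: "\<forall>c yy y0 x0 u0. (\<forall>n. c n \<ge> 1) \<and> incseq c \<and> filterlim c at_top sequentially
              \<and> (\<forall>n. yy n \<in> S) \<and> y0 \<in> S \<and> yy \<longlonglongrightarrow> y0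
              \<and> (\<lambda>n. hscale h (c n) x0 (yy n)) \<longlonglongrightarrow> u0
              \<longrightarrow> u0 \<in> hinf h x0 y0"
    and "xs \<longlonglongrightarrow> x"
    and "\<forall>n. ys n \<in> S" and "y \<in> S" and "ys \<longlonglongrightarrow> y"
    and "\<forall>n. cs n \<ge> 1" and "incseq cs" and "filterlim cs at_top sequentially"
    and "(\<lambda>n. hscale h (cs n) (xs n) (ys n)) \<longlonglongrightarrow> u"
  shows "u \<in> hinf h x y"
proof -
  have "norm (hscale h (cs n) (xs n) (ys n) - hscale h (cs n) x (ys n)) \<le> L * norm (xs n - x)" for n
  proof (rule hscale_lipschitz)
    show "cs n > 0"
      using assms(10) by (meson less_le_trans zero_less_one)
  qed (use assms(4,7) in blast)
  then have "(\<lambda>n. hscale h (cs n) x (ys n)) \<longlonglongrightarrow> u"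
    using assms(6,13) by (rule tendsto_at_limit_point_if_equi_lipschitz)
  then show ?thesis
    using S1 assms(7-12) by blast
qed

end
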